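(* Let $H:[0,1)\to(0,\infty)$ be any function and for $D=(\mu,\mathcal{A},\mathcal{B},\mathcal{F})\in\mathcal{BV}(\Omega)$ set $\Theta^{(H)}_D:=|\mathcal{B}|^2H(|\mu|^2)\,dx\,dy$. Then the following are equivalent: (a) $\Theta^{(H)}$ is gauge-invariant and diffeomorphism-covariant, i.e. $\Theta^{(H)}_{\phi\cdot D}=\Theta^{(H)}_D$ for every domain $\Omega$, every $D\in\mathcal{BV}(\Omega)$ and every gauge $\phi$ on $\Omega$, and $\Theta^{(H)}_{\Phi^*D}=\Phi^*\Theta^{(H)}_D$ for every diffeomorphism $\Phi:\Omega_1\to\Omega_2$ between domains and every $D\in\mathcal{BV}(\Omega_2)$; (b) there is a constant $C>0$ with $H(s)=\frac{C}{1-s}$ for all $s\in[0,1)$.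
   Context: A domain is an open connected subset of $\mathbb{C}$, $z=x+iy$. $\mathcal{BV}(\Omega)$ is the set of quadruples $(\mu,\mathcal{A},\mathcal{B},\mathcal{F})$ of continuous complex functions on $\Omega$ with $|\mu|<1$ pointwise. Gauge action: for a $C^1$ nowhere-vanishing $\phi$ on $\Omega$, $\phi\cdot(\mu,\mathcal{A},\mathcal{B},\mathcal{F})=(\mu,\ \mathcal{A}-\phi_{\bar z}/\phi+\mu\phi_z/\phi,\ \mathcal{B}\phi/\bar\phi,\ \phi\mathcal{F})$. Diffeomorphism: $C^1$ bijection $\Phi:\Omega_1\to\Omega_2$ with $C^1$ inverse and $J=|\Phi_z|^2-|\Phi_{\bar z}|^2>0$; for $D\in\mathcal{BV}(\Omega_2)$, with $K=\Phi_z+(\mu\circ\Phi)\overline{\Phi_{\bar z}}$, $\Phi^*D=((\Phi_{\bar z}+(\mu\circ\Phi)\overline{\Phi_z})/K,\ J(\mathcal{A}\circ\Phi)/K,\ J(\mathcal{B}\circ\Phi)/K,\ J(\mathcal{F}\circ\Phi)/K)$. The pullback of a 2-form is $\Phi^*(f\,dx\,dy)=(f\circ\Phi)J\,dx\,dy$. *)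

theory Defs
  imports "HOL-Analysis.Analysis"
begin

definition is_domain :: "complex set \<Rightarrow> bool" where
  "is_domain \<Omega> \<longleftrightarrow> open \<Omega> \<and> connected \<Omega>"

definition wirt_z :: "(complex \<Rightarrow> complex) \<Rightarrow> complex \<Rightarrow> complex" where
  "wirt_z f z = (frechet_derivative f (at z) 1 - \<i> * frechet_derivative f (at z) \<i>) / 2"

definition wirt_zbar :: "(complex \<Rightarrow> complex) \<Rightarrow> complex \<Rightarrow> complex" where
  "wirt_zbar f z = (frechet_derivative f (at z) 1 + \<i> * frechet_derivative f (at z) \<i>) / 2"

definition C1_on :: "complex set \<Rightarrow> (complex \<Rightarrow> complex) \<Rightarrow> bool" where
  "C1_on \<Omega> f \<longleftrightarrow> (\<forall>z\<in>\<Omega>. f differentiable (at z))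
     \<and> continuous_on \<Omega> (wirt_z f) \<and> continuous_on \<Omega> (wirt_zbar f)"

type_synonym bvdata =
  "(complex \<Rightarrow> complex) \<times> (complex \<Rightarrow> complex) \<times> (complex \<Rightarrow> complex) \<times> (complex \<Rightarrow> complex)"

definition BV :: "complex set \<Rightarrow> bvdata set" where
  "BV \<Omega> = {(\<mu>, A, B, F). continuous_on \<Omega> \<mu> \<and> continuous_on \<Omega> A \<and> continuous_on \<Omega> B
      \<and> continuous_on \<Omega> F \<and> (\<forall>z\<in>\<Omega>. norm (\<mu> z) < 1)}"

definition is_gauge :: "complex set \<Rightarrow> (complex \<Rightarrow> complex) \<Rightarrow> bool" where
  "is_gauge \<Omega> \<phi> \<longleftrightarrow> C1_on \<Omega> \<phi> \<and> (\<forall>z\<in>\<Omega>. \<phi> z \<noteq> 0)"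

definition gauge_act :: "(complex \<Rightarrow> complex) \<Rightarrow> bvdata \<Rightarrow> bvdata" where
  "gauge_act \<phi> D = (case D of (\<mu>, A, B, F) \<Rightarrow>
     (\<mu>,
      \<lambda>z. A z - wirt_zbar \<phi> z / \<phi> z + \<mu> z * wirt_z \<phi> z / \<phi> z,
      \<lambda>z. B z * \<phi> z / cnj (\<phi> z),
      \<lambda>z. \<phi> z * F z))"

definition jac :: "(complex \<Rightarrow> complex) \<Rightarrow> complex \<Rightarrow> real" where
  "jac \<Phi> z = (norm (wirt_z \<Phi> z))\<^sup>2 - (norm (wirt_zbar \<Phi> z))\<^sup>2"

definition is_diffeo :: "complex set \<Rightarrow> complex set \<Rightarrow> (complex \<Rightarrow> complex) \<Rightarrow> bool" where
  "is_diffeo \<Omega>1 \<Omega>2 \<Phi> \<longleftrightarrow> bij_betw \<Phi> \<Omega>1 \<Omega>2 \<and> C1_on \<Omega>1 \<Phi>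
     \<and> C1_on \<Omega>2 (inv_into \<Omega>1 \<Phi>) \<and> (\<forall>z\<in>\<Omega>1. jac \<Phi> z > 0)"

definition pullback :: "(complex \<Rightarrow> complex) \<Rightarrow> bvdata \<Rightarrow> bvdata" where
  "pullback \<Phi> D = (case D of (\<mu>, A, B, F) \<Rightarrow>
     (let K = (\<lambda>z. wirt_z \<Phi> z + \<mu> (\<Phi> z) * cnj (wirt_zbar \<Phi> z)) in
     (\<lambda>z. (wirt_zbar \<Phi> z + \<mu> (\<Phi> z) * cnj (wirt_z \<Phi> z)) / K z,
      \<lambda>z. of_real (jac \<Phi> z) * A (\<Phi> z) / K z,
      \<lambda>z. of_real (jac \<Phi> z) * B (\<Phi> z) / K z,
      \<lambda>z. of_real (jac \<Phi> z) * F (\<Phi> z) / K z)))"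

text \<open>A 2-form f dx dy is represented by its density f; pullback of 2-forms.\<close>
definition pullback2 :: "(complex \<Rightarrow> complex) \<Rightarrow> (complex \<Rightarrow> real) \<Rightarrow> complex \<Rightarrow> real" where
  "pullback2 \<Phi> f = (\<lambda>z. f (\<Phi> z) * jac \<Phi> z)"

definition Theta :: "(real \<Rightarrow> real) \<Rightarrow> bvdata \<Rightarrow> complex \<Rightarrow> real" where
  "Theta H D = (case D of (\<mu>, A, B, F) \<Rightarrow> (\<lambda>z. (norm (B z))\<^sup>2 * H ((norm (\<mu> z))\<^sup>2)))"

end

(* Gauge invariance is automatic: a gauge multiplies B by the unimodular factor phi / cnj phi
   and leaves mu alone. A diffeomorphism with Wirtinger derivatives a = Phi_z, b = Phi_zbar and
   Jacobian J = |a|^2 - |b|^2 replaces mu by N / K and B by J B / K, where K = a + mu cnj b and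
   N = b + mu cnj a. The identity |K|^2 - |N|^2 = J (1 - |mu|^2) shows that 1 / (1 - |mu|^2)
   picks up exactly the factor |K|^2 / J, so H(s) = C / (1 - s) is covariant. Conversely,
   pulling back mu = 0, B = 1 along the real-linear diffeomorphism z + sqrt s cnj z of the plane
   (J = 1 - s, new |mu|^2 = s) forces (1 - s) H(s) = H(0). *)
theory Submission
  imports Defs
begin

lemma has_derivative_real_linear:
  fixes a b :: complex
  shows "((\<lambda>z. a * z + b * cnj z) has_derivative (\<lambda>h. a * h + b * cnj h)) (at z)"
  by (auto intro!: derivative_eq_intros)

lemma
  fixes a b :: complex
  shows wirt_z_real_linear: "wirt_z (\<lambda>z. a * z + b * cnj z) z = a"
    and wirt_zbar_real_linear: "wirt_zbar (\<lambda>z. a * z + b * cnj z) z = b"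
proof -
  have D: "frechet_derivative (\<lambda>z. a * z + b * cnj z) (at z) = (\<lambda>h. a * h + b * cnj h)"
    using frechet_derivative_at[OF has_derivative_real_linear] by metis
  show "wirt_z (\<lambda>z. a * z + b * cnj z) z = a"
    unfolding wirt_z_def D by (simp add: algebra_simps)
  show "wirt_zbar (\<lambda>z. a * z + b * cnj z) z = b"
    unfolding wirt_zbar_def D by (simp add: algebra_simps)
qed

lemma C1_on_real_linear: "C1_on S (\<lambda>z. a * z + b * cnj z)"
  using has_derivative_real_linear
  by (auto simp: C1_on_def wirt_z_real_linear wirt_zbar_real_linear differentiable_def)

lemma jac_real_linear: "jac (\<lambda>z. a * z + b * cnj z) z = (cmod a)\<^sup>2 - (cmod b)\<^sup>2"
  by (simp add: jac_def wirt_z_real_linear wirt_zbar_real_linear)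

lemma real_linear_inverse:
  fixes a b :: complex
  defines "J \<equiv> complex_of_real ((cmod a)\<^sup>2 - (cmod b)\<^sup>2)"
  assumes "J \<noteq> 0"
  shows "(cnj a / J) * (a * z + b * cnj z) + (- b / J) * cnj (a * z + b * cnj z) = z"
    and "a * ((cnj a / J) * z + (- b / J) * cnj z) + b * cnj ((cnj a / J) * z + (- b / J) * cnj z) = z"
proof -
  have "cnj a * (a * z + b * cnj z) - b * cnj (a * z + b * cnj z) = J * z"
    unfolding J_def of_real_diff complex_norm_square by (simp add: algebra_simps)
  then show "(cnj a / J) * (a * z + b * cnj z) + (- b / J) * cnj (a * z + b * cnj z) = z"
    using assms(2) by (simp add: field_simps)
  have "a * (cnj a * z - b * cnj z) + b * cnj (cnj a * z - b * cnj z) = J * z"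
    unfolding J_def of_real_diff complex_norm_square by (simp add: algebra_simps)
  moreover have "cnj J = J"
    by (simp add: J_def)
  ultimately show "a * ((cnj a / J) * z + (- b / J) * cnj z) + b * cnj ((cnj a / J) * z + (- b / J) * cnj z) = z"
    using assms(2) by (simp add: field_simps)
qed

lemma is_diffeo_real_linear:
  fixes a b :: complex
  assumes "cmod b < cmod a"
  shows "is_diffeo UNIV UNIV (\<lambda>z. a * z + b * cnj z)"
proof -
  define J where "J = complex_of_real ((cmod a)\<^sup>2 - (cmod b)\<^sup>2)"
  have "(cmod b)\<^sup>2 < (cmod a)\<^sup>2"
    using assms by (simp add: power_strict_mono)
  then have J: "J \<noteq> 0" "(cmod a)\<^sup>2 - (cmod b)\<^sup>2 > 0"
    unfolding J_def of_real_eq_0_iff by linarith+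
  let ?\<Phi> = "\<lambda>z. a * z + b * cnj z" and ?g = "\<lambda>w. (cnj a / J) * w + (- b / J) * cnj w"
  have "bij ?\<Phi>"
    using real_linear_inverse[OF J(1)[unfolded J_def]] J_def
    by (intro bij_betw_byWitness[where f' = ?g]) auto
  moreover have "inv_into UNIV ?\<Phi> = ?g"
    using real_linear_inverse[OF J(1)[unfolded J_def]] J_def \<open>bij ?\<Phi>\<close>
    by (intro ext inv_into_f_eq) (auto simp: bij_is_inj)
  moreover have "C1_on UNIV ?g"
    by (rule C1_on_real_linear)
  ultimately show ?thesis
    using J(2) by (simp add: is_diffeo_def C1_on_real_linear jac_real_linear)
qed

definition gauge_invariant :: "(real \<Rightarrow> real) \<Rightarrow> bool" where
  "gauge_invariant H \<longleftrightarrow> (\<forall>\<Omega> D \<phi>. is_domain \<Omega> \<and> D \<in> BV \<Omega> \<and> is_gauge \<Omega> \<phi> \<longrightarrow>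
     (\<forall>z\<in>\<Omega>. Theta H (gauge_act \<phi> D) z = Theta H D z))"

definition diffeo_covariant :: "(real \<Rightarrow> real) \<Rightarrow> bool" where
  "diffeo_covariant H \<longleftrightarrow> (\<forall>\<Omega>1 \<Omega>2 \<Phi> D.
     is_domain \<Omega>1 \<and> is_domain \<Omega>2 \<and> is_diffeo \<Omega>1 \<Omega>2 \<Phi> \<and> D \<in> BV \<Omega>2 \<longrightarrow>
     (\<forall>z\<in>\<Omega>1. Theta H (pullback \<Phi> D) z = pullback2 \<Phi> (Theta H D) z))"

lemma diffeo_covariantD:
  assumes "diffeo_covariant H" "is_domain \<Omega>1" "is_domain \<Omega>2" "is_diffeo \<Omega>1 \<Omega>2 \<Phi>" "D \<in> BV \<Omega>2"
    and "z \<in> \<Omega>1"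
  shows "Theta H (pullback \<Phi> D) z = pullback2 \<Phi> (Theta H D) z"
  using assms unfolding diffeo_covariant_def by meson

lemma Theta_gauge_act:
  assumes "\<phi> z \<noteq> 0"
  shows "Theta H (gauge_act \<phi> D) z = Theta H D z"
  using assms by (cases D) (simp add: Theta_def gauge_act_def norm_mult norm_divide)

lemma gauge_invariant_Theta: "gauge_invariant H"
  by (auto simp: gauge_invariant_def is_gauge_def Theta_gauge_act)

lemma cmod_add_mult_cnj_power2_diff:
  fixes a b m :: complex
  shows "(cmod (a + m * cnj b))\<^sup>2 - (cmod (b + m * cnj a))\<^sup>2
           = ((cmod a)\<^sup>2 - (cmod b)\<^sup>2) * (1 - (cmod m)\<^sup>2)"
  unfolding cmod_power2 by (simp add: algebra_simps power2_eq_square)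

lemma hyperbolic_density_pullback_pointwise:
  fixes a b m \<beta> :: complex
  defines "J \<equiv> (cmod a)\<^sup>2 - (cmod b)\<^sup>2" and "K \<equiv> a + m * cnj b" and "N \<equiv> b + m * cnj a"
  assumes H: "\<forall>s\<in>{0..<1}. H s = C / (1 - s)" and m: "cmod m < 1" and J: "J > 0"
  shows "(cmod (of_real J * \<beta> / K))\<^sup>2 * H ((cmod (N / K))\<^sup>2) = (cmod \<beta>)\<^sup>2 * H ((cmod m)\<^sup>2) * J"
proof -
  have m2: "(cmod m)\<^sup>2 < 1"
    using m by (simp add: abs_square_less_1)
  have KN: "(cmod K)\<^sup>2 - (cmod N)\<^sup>2 = J * (1 - (cmod m)\<^sup>2)"
    unfolding J_def K_def N_def by (rule cmod_add_mult_cnj_power2_diff)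
  moreover have "J * (1 - (cmod m)\<^sup>2) > 0"
    using J m2 by simp
  ultimately have K: "(cmod K)\<^sup>2 > 0"
    using zero_le_power2[of "cmod N"] by linarith
  have NK: "1 - (cmod (N / K))\<^sup>2 = J * (1 - (cmod m)\<^sup>2) / (cmod K)\<^sup>2"
    using K KN by (simp add: norm_divide field_simps)
  then have "1 - (cmod (N / K))\<^sup>2 > 0"
    using J m2 K by simp
  then have "H ((cmod (N / K))\<^sup>2) = C * (cmod K)\<^sup>2 / (J * (1 - (cmod m)\<^sup>2))"
    using H NK by simp
  moreover have "H ((cmod m)\<^sup>2) = C / (1 - (cmod m)\<^sup>2)"
    using H m2 by simp
  ultimately show ?thesis
    using J m2 K
    by (simp add: norm_mult norm_divide power_divide power_mult_distrib)
      (simp add: field_simps power2_eq_square)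
qed

lemma diffeo_covariant_hyperbolic:
  assumes "\<forall>s\<in>{0..<1}. H s = C / (1 - s)"
  shows "diffeo_covariant H"
  unfolding diffeo_covariant_def
proof (intro allI impI ballI)
  fix \<Omega>1 \<Omega>2 \<Phi> D z
  assume "is_domain \<Omega>1 \<and> is_domain \<Omega>2 \<and> is_diffeo \<Omega>1 \<Omega>2 \<Phi> \<and> D \<in> BV \<Omega>2" and z: "z \<in> \<Omega>1"
  then have \<Phi>: "is_diffeo \<Omega>1 \<Omega>2 \<Phi>" and D: "D \<in> BV \<Omega>2"
    by auto
  obtain \<mu> A B F where D_eq: "D = (\<mu>, A, B, F)"
    by (cases D)
  have "\<Phi> z \<in> \<Omega>2"
    using \<Phi> z by (auto simp: is_diffeo_def bij_betw_def)
  then have "cmod (\<mu> (\<Phi> z)) < 1"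
    using D by (auto simp: BV_def D_eq)
  moreover have "jac \<Phi> z > 0"
    using \<Phi> z by (auto simp: is_diffeo_def)
  ultimately show "Theta H (pullback \<Phi> D) z = pullback2 \<Phi> (Theta H D) z"
    using hyperbolic_density_pullback_pointwise[OF assms, of "\<mu> (\<Phi> z)" "wirt_z \<Phi> z" "wirt_zbar \<Phi> z"]
    by (simp add: Theta_def pullback_def pullback2_def D_eq Let_def jac_def)
qed

lemma diffeo_covariant_imp_hyperbolic:
  assumes "diffeo_covariant H" and s: "s \<in> {0..<1}"
  shows "(1 - s) * H s = H 0"
proof -
  define \<Phi> where "\<Phi> = (\<lambda>z. 1 * z + complex_of_real (sqrt s) * cnj z)"
  define D :: bvdata where "D = (\<lambda>_. 0, \<lambda>_. 0, \<lambda>_. 1, \<lambda>_. 0)"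
  have "is_diffeo UNIV UNIV \<Phi>"
    unfolding \<Phi>_def using s by (intro is_diffeo_real_linear) simp
  moreover have "is_domain UNIV"
    by (simp add: is_domain_def connected_UNIV)
  moreover have "D \<in> BV UNIV"
    by (simp add: D_def BV_def)
  ultimately have "Theta H (pullback \<Phi> D) 0 = pullback2 \<Phi> (Theta H D) 0"
    using diffeo_covariantD[OF assms(1)] by (meson UNIV_I)
  moreover have "wirt_z \<Phi> z = 1" "wirt_zbar \<Phi> z = complex_of_real (sqrt s)" for z
    unfolding \<Phi>_def wirt_z_real_linear wirt_zbar_real_linear by simp_all
  moreover have "jac \<Phi> z = 1 - s" for z
    unfolding \<Phi>_def jac_real_linear using s by simp
  ultimately have "(1 - s)\<^sup>2 * H s = H 0 * (1 - s)"
    using s by (simp add: D_def Theta_def pullback_def pullback2_def Let_def norm_mult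
        del: of_real_diff)
  then show ?thesis
    using s by (simp add: power2_eq_square)
qed

theorem proposition8p3:
  fixes H :: "real \<Rightarrow> real"
  assumes Hpos: "\<forall>s\<in>{0..<1}. H s > 0"
  shows "((\<forall>\<Omega> D \<phi>. is_domain \<Omega> \<and> D \<in> BV \<Omega> \<and> is_gauge \<Omega> \<phi> \<longrightarrow>
              (\<forall>z\<in>\<Omega>. Theta H (gauge_act \<phi> D) z = Theta H D z))
          \<and> (\<forall>\<Omega>1 \<Omega>2 \<Phi> D. is_domain \<Omega>1 \<and> is_domain \<Omega>2 \<and> is_diffeo \<Omega>1 \<Omega>2 \<Phi> \<and> D \<in> BV \<Omega>2 \<longrightarrow>
              (\<forall>z\<in>\<Omega>1. Theta H (pullback \<Phi> D) z = pullback2 \<Phi> (Theta H D) z)))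
         \<longleftrightarrow> (\<exists>C>0. \<forall>s\<in>{0..<1}. H s = C / (1 - s))"
proof -
  have "diffeo_covariant H \<longleftrightarrow> (\<exists>C>0. \<forall>s\<in>{0..<1}. H s = C / (1 - s))" (is "_ \<longleftrightarrow> ?C")
  proof
    assume "diffeo_covariant H"
    then have "\<forall>s\<in>{0..<1}. H s = H 0 / (1 - s)"
      using diffeo_covariant_imp_hyperbolic by (simp add: eq_divide_eq mult.commute)
    moreover have "H 0 > 0"
      using Hpos by simp
    ultimately show ?C
      by blast
  next
    assume ?C
    then obtain C where "\<forall>s\<in>{0..<1}. H s = C / (1 - s)"
      by blast
    then show "diffeo_covariant H"
      by (rule diffeo_covariant_hyperbolic)
  qed
  then have "gauge_invariant H \<and> diffeo_covariant H \<longleftrightarrow> ?C"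
    using gauge_invariant_Theta by simp
  then show ?thesis
    unfolding gauge_invariant_def diffeo_covariant_def .
qed

end
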